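(* The set of outer deterministic multirelations $X\leftrightarrow\mathcal{P}Y$, ordered by $\sqsubseteq_\downarrow$ (which on this set equals $\sqsubseteq_\uparrow$ and $\sqsubseteq_\updownarrow$), is a lattice in which the supremum of $R$ and $S$ is $R\Cup S$ and the infimum is $R\Cap S$.
   Context: $R\Cup S=\{(a,A\cup B)\mid (a,A)\in R,(a,B)\in S\}$, $R\Cap S=\{(a,A\cap B)\mid (a,A)\in R,(a,B)\in S\}$. $R^{\uparrow}=\{(a,A)\mid\exists B.(a,B)\in R\wedge B\subseteq A\}$, $R^{\downarrow}=\{(a,A)\mid\exists B.(a,B)\in R\wedge A\subseteq B\}$; $R\sqsubseteq_\uparrow S\iff S\subseteq R^{\uparrow}$; $R\sqsubseteq_\downarrow S\iff R\subseteq S^{\downarrow}$; $R\sqsubseteq_\updownarrow S\iff R\sqsubseteq_\downarrow S\wedge R\sqsubseteq_\uparrow S$. A multirelation $R$ is outer deterministic if for each $a\in X$ there is exactly one $B$ with $(a,B)\in R$. *)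

theory Defs
  imports Main
begin

text \<open>Multirelations X <-> P Y are sets of pairs (a, A) with a :: 'a, A :: 'b set;
  X and Y are the universes of the types 'a and 'b.\<close>

type_synonym ('a, 'b) mrel = "('a \<times> 'b set) set"

definition mr_union :: "('a,'b) mrel \<Rightarrow> ('a,'b) mrel \<Rightarrow> ('a,'b) mrel" (infixl "\<Cup>" 65) where
  "R \<Cup> S = {(a, A \<union> B) | a A B. (a, A) \<in> R \<and> (a, B) \<in> S}"

definition mr_inter :: "('a,'b) mrel \<Rightarrow> ('a,'b) mrel \<Rightarrow> ('a,'b) mrel" (infixl "\<Cap>" 70) where
  "R \<Cap> S = {(a, A \<inter> B) | a A B. (a, A) \<in> R \<and> (a, B) \<in> S}"

definition up_closure :: "('a,'b) mrel \<Rightarrow> ('a,'b) mrel" where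
  "up_closure R = {(a, A). \<exists>B. (a, B) \<in> R \<and> B \<subseteq> A}"

definition down_closure :: "('a,'b) mrel \<Rightarrow> ('a,'b) mrel" where
  "down_closure R = {(a, A). \<exists>B. (a, B) \<in> R \<and> A \<subseteq> B}"

definition le_up :: "('a,'b) mrel \<Rightarrow> ('a,'b) mrel \<Rightarrow> bool" where
  "le_up R S \<longleftrightarrow> S \<subseteq> up_closure R"

definition le_down :: "('a,'b) mrel \<Rightarrow> ('a,'b) mrel \<Rightarrow> bool" where
  "le_down R S \<longleftrightarrow> R \<subseteq> down_closure S"

definition le_updown :: "('a,'b) mrel \<Rightarrow> ('a,'b) mrel \<Rightarrow> bool" where
  "le_updown R S \<longleftrightarrow> le_down R S \<and> le_up R S"

definition outer_det :: "('a,'b) mrel \<Rightarrow> bool" where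
  "outer_det R \<longleftrightarrow> (\<forall>a. \<exists>!B. (a, B) \<in> R)"

end

theory Submission
  imports Defs
begin

text \<open>An outer deterministic multirelation is the graph of a function f :: 'a \<Rightarrow> 'b set.
  On graphs both the down- and the up-order become the pointwise inclusion f \<le> g, while \<Cup> and \<Cap>
  become the pointwise union and intersection. The outer deterministic multirelations are
  therefore an isomorphic copy of the function lattice 'a \<Rightarrow> 'b set.\<close>

definition mr_graph :: "('a \<Rightarrow> 'b set) \<Rightarrow> ('a,'b) mrel" where
  "mr_graph f = range (\<lambda>a. (a, f a))"

lemma mem_mr_graph_iff [simp]: "(a, A) \<in> mr_graph f \<longleftrightarrow> A = f a"
  by (auto simp: mr_graph_def)

lemma mr_graph_inject [simp]: "mr_graph f = mr_graph g \<longleftrightarrow> f = g"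
  by (auto simp: set_eq_iff fun_eq_iff)

lemma outer_det_iff_mr_graph: "outer_det R \<longleftrightarrow> (\<exists>f. R = mr_graph f)"
proof
  assume "outer_det R"
  define f where "f a = (THE B. (a, B) \<in> R)" for a
  have "(a, B) \<in> R \<longleftrightarrow> B = f a" for a B
    using \<open>outer_det R\<close> unfolding outer_det_def f_def by (metis theI)
  then have "R = mr_graph f"
    by auto
  then show "\<exists>f. R = mr_graph f"
    by blast
qed (auto simp: outer_det_def)

lemma Ball_outer_det_iff: "(\<forall>R \<in> {R. outer_det R}. P R) \<longleftrightarrow> (\<forall>f. P (mr_graph f))"
  by (auto simp: outer_det_iff_mr_graph)

lemma le_down_mr_graph_iff [simp]: "le_down (mr_graph f) (mr_graph g) \<longleftrightarrow> f \<le> g"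
  by (auto simp: le_down_def down_closure_def le_fun_def mr_graph_def)

lemma le_up_mr_graph_iff [simp]: "le_up (mr_graph f) (mr_graph g) \<longleftrightarrow> f \<le> g"
  by (auto simp: le_up_def up_closure_def le_fun_def mr_graph_def)

lemma le_updown_mr_graph_iff [simp]: "le_updown (mr_graph f) (mr_graph g) \<longleftrightarrow> f \<le> g"
  by (simp add: le_updown_def)

lemma mr_union_mr_graph [simp]: "mr_graph f \<Cup> mr_graph g = mr_graph (sup f g)"
  by (auto simp: mr_union_def)

lemma mr_inter_mr_graph [simp]: "mr_graph f \<Cap> mr_graph g = mr_graph (inf f g)"
  by (auto simp: mr_inter_def)

theorem proposition5p10:
  fixes OD :: "('a,'b) mrel set"
  defines "OD \<equiv> {R. outer_det R}"
  shows
    "(\<forall>R\<in>OD. \<forall>S\<in>OD. le_down R S = le_up R S \<and> le_down R S = le_updown R S)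
   \<and> (\<forall>R\<in>OD. le_down R R)
   \<and> (\<forall>R\<in>OD. \<forall>S\<in>OD. le_down R S \<and> le_down S R \<longrightarrow> R = S)
   \<and> (\<forall>R\<in>OD. \<forall>S\<in>OD. \<forall>T\<in>OD. le_down R S \<and> le_down S T \<longrightarrow> le_down R T)
   \<and> (\<forall>R\<in>OD. \<forall>S\<in>OD.
        R \<Cup> S \<in> OD \<and> le_down R (R \<Cup> S) \<and> le_down S (R \<Cup> S)
        \<and> (\<forall>T\<in>OD. le_down R T \<and> le_down S T \<longrightarrow> le_down (R \<Cup> S) T))
   \<and> (\<forall>R\<in>OD. \<forall>S\<in>OD.
        R \<Cap> S \<in> OD \<and> le_down (R \<Cap> S) R \<and> le_down (R \<Cap> S) S
        \<and> (\<forall>T\<in>OD. le_down T R \<and> le_down T S \<longrightarrow> le_down T (R \<Cap> S)))"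
  unfolding OD_def Ball_outer_det_iff
  by (simp add: outer_det_iff_mr_graph) (blast intro: antisym order_trans)

end
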